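(* For any pair of search/learning algorithms $\mathcal{A}_1$, $\mathcal{A}_2$ operating on discrete finite search space $\Omega$, any closed under permutation set of target sets $\tau$, any set of information resources $\mathcal{B}$, and decomposable probability-of-success metric $\phi$, \[ \sum_{t\in\tau}\sum_{f\in\mathcal{B}} \phi_{\mathcal{A}_1}(t,f) = \sum_{t\in\tau}\sum_{f\in\mathcal{B}} \phi_{\mathcal{A}_2}(t,f). \]
   Context: Algorithmic search framework: a finite discrete search space $\Omega$, a nonempty target set $t\subseteq\Omega$ (with target function/indicator vector $\mathbf{t}\in\{0,1\}^{|\Omega|}$), and an external information resource $f$. A black-box iterative algorithm $\mathcal{A}$ produces, at each step, a probability distribution over $\Omega$ from which it samples, using $f$ and the search history. A probability-of-success metric $\phi$ is decomposable if there exists a probability vector $\mathbf{P}_{\phi,f}$ over $\Omega$ (not a function of $t$, conditionally independent of it given $f$) with $\phi(t,f)=\mathbf{t}^{\top}\mathbf{P}_{\phi,f}=P_\phi(X\in t\mid f)$. $\phi_{\mathcal{A}}(t,f)$ denotes the metric for algorithm $\mathcal{A}$. A set of target sets is closed under permutation if it is closed under permutations of the elements of $\Omega$. *)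

theory Defs
  imports Complex_Main
begin

definition prob_vector :: "('a::finite \<Rightarrow> real) \<Rightarrow> bool" where
  "prob_vector p \<longleftrightarrow> (\<forall>x. 0 \<le> p x) \<and> (\<Sum>x\<in>UNIV. p x) = 1"

text \<open>A probability-of-success metric phi (of an algorithm) is decomposable if there is,
  for each information resource f, a probability vector P f over Omega, depending only on f
  (not on the target t), such that phi t f = t^T P f = sum of P f over t.\<close>
definition decomposable :: "('a::finite set \<Rightarrow> 'f \<Rightarrow> real) \<Rightarrow> bool" where
  "decomposable phi \<longleftrightarrow>
     (\<exists>P :: 'f \<Rightarrow> 'a \<Rightarrow> real. (\<forall>f. prob_vector (P f)) \<and> (\<forall>t f. phi t f = (\<Sum>x\<in>t. P f x)))"

definition closed_under_permutation :: "'a set set \<Rightarrow> bool" where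
  "closed_under_permutation T \<longleftrightarrow> (\<forall>\<sigma>. bij \<sigma> \<longrightarrow> (\<forall>t\<in>T. \<sigma> ` t \<in> T))"

end

theory Submission
  imports Defs "HOL-Combinatorics.Transposition"
begin

text \<open>Writing \<open>\<phi> t f = (\<Sum>x\<in>t. P f x)\<close> and exchanging the order of summation,
  \<open>\<Sum>t\<in>\<tau>. \<phi> t f\<close> becomes \<open>\<Sum>x. P f x \<cdot> #{t\<in>\<tau>. x \<in> t}\<close>. Closure of \<open>\<tau>\<close> under the
  transposition of two points \<open>x\<close>, \<open>y\<close> maps the targets containing \<open>x\<close> injectively to those
  containing \<open>y\<close>, so the count does not depend on \<open>x\<close>. Since \<open>P f\<close> sums to \<open>1\<close>, the sum over
  \<open>\<tau>\<close> is this count, whatever the algorithm and the information resource.\<close>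

lemma card_targets_containing_le_bij:
  fixes \<tau> :: "'a::finite set set"
  assumes "closed_under_permutation \<tau>" and "bij \<sigma>"
  shows "card {t\<in>\<tau>. x \<in> t} \<le> card {t\<in>\<tau>. \<sigma> x \<in> t}"
proof (rule card_inj_on_le)
  show "inj_on ((`) \<sigma>) {t\<in>\<tau>. x \<in> t}"
    using bij_is_inj[OF \<open>bij \<sigma>\<close>] by (meson inj_image_eq_iff inj_onI)
  show "(`) \<sigma> ` {t\<in>\<tau>. x \<in> t} \<subseteq> {t\<in>\<tau>. \<sigma> x \<in> t}"
    using assms unfolding closed_under_permutation_def by blast
qed simp

lemma card_targets_containing_eq:
  fixes \<tau> :: "'a::finite set set"
  assumes "closed_under_permutation \<tau>"
  shows "card {t\<in>\<tau>. x \<in> t} = card {t\<in>\<tau>. y \<in> t}"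
  using card_targets_containing_le_bij[OF assms, of "transpose x y" x]
    card_targets_containing_le_bij[OF assms, of "transpose x y" y]
  by simp

lemma sum_sum_over_members_eq:
  fixes \<tau> :: "'a::finite set set" and p :: "'a \<Rightarrow> 'b::comm_semiring_1"
  shows "(\<Sum>t\<in>\<tau>. \<Sum>x\<in>t. p x) = (\<Sum>x\<in>UNIV. p x * of_nat (card {t\<in>\<tau>. x \<in> t}))"
proof -
  have "(\<Sum>t\<in>\<tau>. \<Sum>x\<in>t. p x) = (\<Sum>t\<in>\<tau>. \<Sum>x\<in>UNIV. if x \<in> t then p x else 0)"
    by (simp add: sum.If_cases)
  also have "\<dots> = (\<Sum>x\<in>UNIV. \<Sum>t\<in>\<tau>. if x \<in> t then p x else 0)"
    by (rule sum.swap)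
  also have "\<dots> = (\<Sum>x\<in>UNIV. p x * of_nat (card {t\<in>\<tau>. x \<in> t}))"
    by (simp add: sum.inter_filter[symmetric] mult.commute)
  finally show ?thesis .
qed

lemma sum_decomposable_closed_under_permutation:
  fixes \<phi> :: "'a::finite set \<Rightarrow> 'f \<Rightarrow> real" and \<tau> :: "'a set set"
  assumes "decomposable \<phi>" and "closed_under_permutation \<tau>"
  shows "(\<Sum>t\<in>\<tau>. \<phi> t f) = real (card {t\<in>\<tau>. x \<in> t})"
proof -
  obtain P where P: "\<And>f. prob_vector (P f)" and \<phi>: "\<And>t f. \<phi> t f = (\<Sum>y\<in>t. P f y)"
    using assms(1) unfolding decomposable_def by blast
  have "(\<Sum>t\<in>\<tau>. \<phi> t f) = (\<Sum>y\<in>UNIV. P f y * real (card {t\<in>\<tau>. y \<in> t}))"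
    unfolding \<phi> by (rule sum_sum_over_members_eq)
  also have "\<dots> = (\<Sum>y\<in>UNIV. P f y) * real (card {t\<in>\<tau>. x \<in> t})"
    unfolding sum_distrib_right using card_targets_containing_eq[OF assms(2)] by metis
  also have "\<dots> = real (card {t\<in>\<tau>. x \<in> t})"
    using P unfolding prob_vector_def by simp
  finally show ?thesis .
qed

theorem theorem1:
  fixes phi1 phi2 :: "'a::finite set \<Rightarrow> 'f \<Rightarrow> real"
    and \<tau> :: "'a set set" and B :: "'f set"
  assumes "decomposable phi1" and "decomposable phi2"
    and "closed_under_permutation \<tau>"
    and "\<forall>t\<in>\<tau>. t \<noteq> {}"
    and "finite B"
  shows "(\<Sum>t\<in>\<tau>. \<Sum>f\<in>B. phi1 t f) = (\<Sum>t\<in>\<tau>. \<Sum>f\<in>B. phi2 t f)"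
proof -
  have "(\<Sum>t\<in>\<tau>. \<Sum>f\<in>B. phi1 t f) = (\<Sum>f\<in>B. \<Sum>t\<in>\<tau>. phi1 t f)"
    by (rule sum.swap)
  also have "\<dots> = (\<Sum>f\<in>B. \<Sum>t\<in>\<tau>. phi2 t f)"
    using sum_decomposable_closed_under_permutation[OF assms(1,3), where x = undefined]
      sum_decomposable_closed_under_permutation[OF assms(2,3), where x = undefined]
    by simp
  also have "\<dots> = (\<Sum>t\<in>\<tau>. \<Sum>f\<in>B. phi2 t f)"
    by (rule sum.swap)
  finally show ?thesis .
qed

end
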